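(* Consider a qutrit ($\mathbb{C}^3$) with coupling operators the eight Gell-Mann matrices $\sigma^s_{01},\sigma^s_{02},\sigma^s_{12},\sigma^a_{01},\sigma^a_{02},\sigma^a_{12},\sigma^d_1,\sigma^d_2$ and vanishing Hamiltonian. Then the quantum filtering equation in projective coordinates $W=(1,w_1,w_2)$, \[ dw_k=\frac12\sum_j[w_k(L_j^*L_jW)_0-(L_j^*L_jW)_k]\,dt+\sum_j[w_k(L_jW)_0^2-(L_jW)_0(L_jW)_k]\,dt+\sum_j[(L_jW)_k-w_k(L_jW)_0]\,dY^j_t,\quad k=1,2, \] (with $j$ running over the eight Gell-Mann matrices $L_j$ and $Y=(Y^j)$ an eight-dimensional process indexed correspondingly as $Y^{01,s},Y^{02,s},Y^{12,s},Y^{01,a},Y^{02,a},Y^{12,a},Y^{1,d},Y^{2,d}$) takes the form \[ \begin{aligned} dw_1&=(1-w_1^2)\,dY^{01,s}_t-w_1w_2\,dY^{02,s}_t+w_2\,dY^{12,s}_t+i(1+w_1^2)\,dY^{01,a}_t+iw_1w_2\,dY^{02,a}_t-iw_2\,dY^{12,a}_t-2w_1\,dY^{1,d}_t,\\ dw_2&=-w_1w_2\,dY^{01,s}_t+(1-w_2^2)\,dY^{02,s}_t+w_1\,dY^{12,s}_t+iw_1w_2\,dY^{01,a}_t+i(1+w_2^2)\,dY^{02,a}_t+iw_1\,dY^{12,a}_t-w_2\,dY^{1,d}_t-\sqrt3\,w_2\,dY^{2,d}_t, \end{aligned} \] with all $dt$-terms vanishing. Moreover, the equation has exactly the same form when rewritten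 in terms of the innovation process $B$ defined by $dB^{jk,s}_t=dY^{jk,s}_t-2\langle\sigma^s_{jk}\rangle_W\,dt$, $dB^{jk,a}_t=dY^{jk,a}_t-2\langle\sigma^a_{jk}\rangle_W\,dt$, $dB^{k,d}_t=dY^{k,d}_t-2\langle\sigma^d_k\rangle_W\,dt$. Finally, when $Y$ is a standard eight-dimensional Wiener process, the diffusion operator $D$ of this system equals $2\Delta_{pro}$, where \[ \Delta_{pro}S=(1+|w_1|^2+|w_2|^2)\Big[(1+|w_1|^2)\frac{\partial^2S}{\partial w_1\partial\bar w_1}+(1+|w_2|^2)\frac{\partial^2S}{\partial w_2\partial\bar w_2}+w_1\bar w_2\frac{\partial^2S}{\partial w_1\partial\bar w_2}+\bar w_1w_2\frac{\partial^2S}{\partial\bar w_1\partial w_2}\Big] \] is the second order part of the Laplace–Beltrami operator on the complex projective space $P\mathbb{C}^2$.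
   Context: Indices of vectors in $\mathbb{C}^3$ run over $0,1,2$; $(v)_k$ is the $k$-th coordinate. The Gell-Mann matrices: $\sigma^s_{jk}$ ($0\le j<k\le2$) has entries $1$ at positions $(j,k)$ and $(k,j)$ and $0$ elsewhere; $\sigma^a_{jk}$ ($0\le j<k\le 2$) has $-i$ at $(j,k)$, $i$ at $(k,j)$ and $0$ elsewhere; $\sigma^d_1=\mathrm{diag}(1,-1,0)$, $\sigma^d_2=\frac1{\sqrt3}\mathrm{diag}(1,1,-2)$. For a matrix $A$, $\langle A\rangle_W=(W,AW)/(W,W)$ with the standard Hermitian inner product. The projective coordinates are $w_k=\chi_k/\chi_0$ for a state vector $\chi\in\mathbb{C}^3$. *)

theory Defs
  imports "HOL-Analysis.Analysis"
begin

text \<open>3x3 complex matrices and vectors in C^3 are represented as functions on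
  indices 0,1,2 (only indices below 3 are meaningful).\<close>

type_synonym cmat3 = "nat \<Rightarrow> nat \<Rightarrow> complex"
type_synonym cvec3 = "nat \<Rightarrow> complex"

definition mvec :: "cmat3 \<Rightarrow> cvec3 \<Rightarrow> cvec3" where
  "mvec A v = (\<lambda>k. \<Sum>m<3. A k m * v m)"

definition madj :: "cmat3 \<Rightarrow> cmat3" where
  "madj A = (\<lambda>a b. cnj (A b a))"

definition mmul :: "cmat3 \<Rightarrow> cmat3 \<Rightarrow> cmat3" where
  "mmul A B = (\<lambda>a b. \<Sum>m<3. A a m * B m b)"

definition cinner3 :: "cvec3 \<Rightarrow> cvec3 \<Rightarrow> complex" where
  "cinner3 u v = (\<Sum>m<3. cnj (u m) * v m)"

definition expect :: "cmat3 \<Rightarrow> cvec3 \<Rightarrow> complex" where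
  "expect A W = cinner3 W (mvec A W) / cinner3 W W"

definition gm_s :: "nat \<Rightarrow> nat \<Rightarrow> cmat3" where
  "gm_s j k = (\<lambda>a b. if (a = j \<and> b = k) \<or> (a = k \<and> b = j) then 1 else 0)"

definition gm_a :: "nat \<Rightarrow> nat \<Rightarrow> cmat3" where
  "gm_a j k = (\<lambda>a b. if a = j \<and> b = k then - \<i> else if a = k \<and> b = j then \<i> else 0)"

definition gm_d1 :: cmat3 where
  "gm_d1 = (\<lambda>a b. if a = b then (if a = 0 then 1 else if a = 1 then -1 else 0) else 0)"

definition gm_d2 :: cmat3 where
  "gm_d2 = (\<lambda>a b. if a = b then (if a = 2 then -2 / complex_of_real (sqrt 3)
                                   else 1 / complex_of_real (sqrt 3)) else 0)"

text \<open>The eight coupling operators L_0..L_7 in the order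
  s01, s02, s12, a01, a02, a12, d1, d2 (matching Y^{01,s},...,Y^{2,d}).\<close>
definition gm :: "nat \<Rightarrow> cmat3" where
  "gm j = [gm_s 0 1, gm_s 0 2, gm_s 1 2, gm_a 0 1, gm_a 0 2, gm_a 1 2, gm_d1, gm_d2] ! j"

definition Wv :: "complex \<Rightarrow> complex \<Rightarrow> cvec3" where
  "Wv w1 w2 = (\<lambda>m. if m = 0 then 1 else if m = 1 then w1 else w2)"

definition qf_drift :: "complex \<Rightarrow> complex \<Rightarrow> nat \<Rightarrow> complex" where
  "qf_drift w1 w2 k =
     (let W = Wv w1 w2 in
      (1/2) * (\<Sum>j<8. W k * mvec (mmul (madj (gm j)) (gm j)) W 0
                      - mvec (mmul (madj (gm j)) (gm j)) W k)
      + (\<Sum>j<8. W k * (mvec (gm j) W 0)^2 - mvec (gm j) W 0 * mvec (gm j) W k))"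

definition qf_diff :: "complex \<Rightarrow> complex \<Rightarrow> nat \<Rightarrow> nat \<Rightarrow> complex" where
  "qf_diff w1 w2 k j =
     (let W = Wv w1 w2 in mvec (gm j) W k - W k * mvec (gm j) W 0)"

text \<open>dt-coefficient of dw_k after substituting dY^j = dB^j + 2 <L_j>_W dt\<close>
definition qf_innov_drift :: "complex \<Rightarrow> complex \<Rightarrow> nat \<Rightarrow> complex" where
  "qf_innov_drift w1 w2 k =
     qf_drift w1 w2 k + (\<Sum>j<8. qf_diff w1 w2 k j * (2 * expect (gm j) (Wv w1 w2)))"

definition pd :: "(complex \<times> complex \<Rightarrow> complex) \<Rightarrow> complex \<times> complex \<Rightarrow> complex \<times> complex \<Rightarrow> complex" where
  "pd S x u = vector_derivative (\<lambda>t::real. S (x + t *\<^sub>R u)) (at 0)"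

definition pd2 :: "(complex \<times> complex \<Rightarrow> complex) \<Rightarrow> complex \<times> complex \<Rightarrow> complex \<times> complex
                    \<Rightarrow> complex \<times> complex \<Rightarrow> complex" where
  "pd2 S x u v = vector_derivative (\<lambda>t::real. pd S (x + t *\<^sub>R u) v) (at 0)"

text \<open>real basis directions: ev k False = direction of Re w_k, ev k True = Im w_k (k = 1,2)\<close>
definition ev :: "nat \<Rightarrow> bool \<Rightarrow> complex \<times> complex" where
  "ev k im = (let c = (if im then \<i> else 1) in if k = 1 then (c, 0) else (0, c))"

text \<open>Second-order Wirtinger derivative: wirt2 S x k b l c is
  d/d(w_k or conj w_k) of d/d(w_l or conj w_l) of S, where the flag True means
  the conjugate variable. d/dw = (d_x - i d_y)/2, d/dconj w = (d_x + i d_y)/2.\<close>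
definition wirt2 :: "(complex \<times> complex \<Rightarrow> complex) \<Rightarrow> complex \<times> complex
                     \<Rightarrow> nat \<Rightarrow> bool \<Rightarrow> nat \<Rightarrow> bool \<Rightarrow> complex" where
  "wirt2 S x k b l c =
     (let sb = (if b then 1 else -1) :: complex; sc = (if c then 1 else -1) :: complex in
      (1/4) * (pd2 S x (ev k False) (ev l False)
               + sc * \<i> * pd2 S x (ev k False) (ev l True)
               + sb * \<i> * pd2 S x (ev k True) (ev l False)
               + sb * sc * \<i> * \<i> * pd2 S x (ev k True) (ev l True)))"

text \<open>Diffusion operator (generator) of the system dw = drift dt + sum_j g_j dY^j, with Y a
  standard 8-dimensional (real) Wiener process, w regarded as a point of R^4:
  D S = d_drift S + 1/2 sum_j d_{g_j} d_{g_j} S.\<close>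
definition diffusion_op :: "(complex \<times> complex \<Rightarrow> complex) \<Rightarrow> complex \<times> complex \<Rightarrow> complex" where
  "diffusion_op S w =
     pd S w (qf_drift (fst w) (snd w) 1, qf_drift (fst w) (snd w) 2)
     + (1/2) * (\<Sum>j<8. pd2 S w (qf_diff (fst w) (snd w) 1 j, qf_diff (fst w) (snd w) 2 j)
                                (qf_diff (fst w) (snd w) 1 j, qf_diff (fst w) (snd w) 2 j))"

definition laplace_pro :: "(complex \<times> complex \<Rightarrow> complex) \<Rightarrow> complex \<times> complex \<Rightarrow> complex" where
  "laplace_pro S w =
     (let w1 = fst w; w2 = snd w in
      (1 + (cmod w1)^2 + (cmod w2)^2) *
        ((1 + (cmod w1)^2) * wirt2 S w 1 False 1 True
         + (1 + (cmod w2)^2) * wirt2 S w 2 False 2 True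
         + w1 * cnj w2 * wirt2 S w 1 False 2 True
         + cnj w1 * w2 * wirt2 S w 1 True 2 False))"

end

(* The eight Gell-Mann matrices are Hermitian and satisfy the su(3) completeness relation
   sum_a (L_a)_ij (L_a)_kl = 2 delta_il delta_jk - (2/3) delta_ij delta_kl.
   Contracting it with W gives sum_a L_a^2 = 16/3 and shows that the diffusion coefficients
   g_a,k = (L_a W)_k - w_k (L_a W)_0 satisfy sum_a g_a,k (L_a W)_i = 0; together these kill
   both dt-terms of the filtering equation as well as the innovation correction 2 <L_a>_W.
   Since the drift vanishes, the generator is D S = 1/2 sum_a S''(g_a, g_a). Writing the Hessian,
   which is symmetric by Schwarz's theorem, in Wirtinger coordinates, the moments
   sum_a g_a,k g_a,l = 0 and sum_a g_a,k conj g_a,l = 2 |W|^2 (delta_kl + w_k conj w_l)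
   leave exactly 2 Delta_pro S. *)

theory Submission
  imports Defs
begin

lemma sum_lessThan_3: "(\<Sum>m<3. f m) = f 0 + f 1 + f 2" for f :: "nat \<Rightarrow> 'a::comm_monoid_add"
  by (simp add: eval_nat_numeral)

lemma sum_lessThan_8:
  "(\<Sum>m<8. f m) = f 0 + f 1 + f 2 + f 3 + f 4 + f 5 + f 6 + f 7" for f :: "nat \<Rightarrow> 'a::comm_monoid_add"
  by (simp add: eval_nat_numeral)

lemma less_3_cases: "i < 3 \<Longrightarrow> i = 0 \<or> i = 1 \<or> i = (2::nat)" by auto

lemma sum_swap_nested:
  "(\<Sum>a\<in>A. \<Sum>j\<in>J. \<Sum>l\<in>L. f a j l) = (\<Sum>j\<in>J. \<Sum>l\<in>L. \<Sum>a\<in>A. f a j l)"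
  by (subst sum.swap) (rule sum.cong[OF refl], rule sum.swap)

lemma sum_product_swap:
  "(\<Sum>a\<in>A. (\<Sum>j\<in>J. c a j * x j) * (\<Sum>l\<in>L. d a l * y l)) =
    (\<Sum>j\<in>J. \<Sum>l\<in>L. x j * y l * (\<Sum>a\<in>A. c a j * d a l))"
  for x y :: "'b \<Rightarrow> 'c::comm_semiring_1"
proof -
  have "(\<Sum>a\<in>A. (\<Sum>j\<in>J. c a j * x j) * (\<Sum>l\<in>L. d a l * y l)) =
      (\<Sum>a\<in>A. \<Sum>j\<in>J. \<Sum>l\<in>L. x j * y l * (c a j * d a l))"
    by (simp add: sum_product mult_ac)
  also have "\<dots> = (\<Sum>j\<in>J. \<Sum>l\<in>L. \<Sum>a\<in>A. x j * y l * (c a j * d a l))"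
    by (rule sum_swap_nested)
  finally show ?thesis
    by (simp add: sum_distrib_left)
qed

section \<open>The Gell-Mann matrices\<close>

lemma gm_nth:
  "gm 0 = gm_s 0 1" "gm 1 = gm_s 0 2" "gm 2 = gm_s 1 2" "gm 3 = gm_a 0 1"
  "gm 4 = gm_a 0 2" "gm 5 = gm_a 1 2" "gm 6 = gm_d1" "gm 7 = gm_d2"
  by (simp_all add: gm_def eval_nat_numeral)

lemma sqrt3_sq: "complex_of_real (sqrt 3) * complex_of_real (sqrt 3) = 3"
  by (simp flip: of_real_mult)

lemma gm_in_set: "a < 8 \<Longrightarrow>
    gm a \<in> set [gm_s 0 1, gm_s 0 2, gm_s 1 2, gm_a 0 1, gm_a 0 2, gm_a 1 2, gm_d1, gm_d2]"
  unfolding gm_def by (rule nth_mem) simp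

lemma gm_hermitian: "a < 8 \<Longrightarrow> cnj (gm a i j) = gm a j i"
  by (drule gm_in_set) (auto simp: gm_s_def gm_a_def gm_d1_def gm_d2_def)

lemma gm_completeness:
  assumes "i < 3" "j < 3" "k < 3" "l < 3"
  shows "(\<Sum>a<8. gm a i j * gm a k l) =
    (if i = l \<and> j = k then 2 else 0) - (if i = j \<and> k = l then 2/3 else 0)"
  unfolding sum_lessThan_8 gm_nth
  using less_3_cases[OF assms(1)] less_3_cases[OF assms(2)] less_3_cases[OF assms(3)]
    less_3_cases[OF assms(4)]
  by (elim disjE) (simp_all add: gm_s_def gm_a_def gm_d1_def gm_d2_def sqrt3_sq)

lemma sum_gm_mvec_mult:
  assumes "i < 3" "k < 3"
  shows "(\<Sum>a<8. mvec (gm a) x i * mvec (gm a) y k) = 2 * x k * y i - 2/3 * x i * y k"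
  unfolding mvec_def sum_product_swap
  unfolding sum_lessThan_3
  using less_3_cases[OF assms(1)] less_3_cases[OF assms(2)]
  by (elim disjE) (simp_all add: gm_completeness algebra_simps)

lemma sum_gm_mvec_mult_cnj:
  assumes "i < 3" "k < 3"
  shows "(\<Sum>a<8. mvec (gm a) x i * cnj (mvec (gm a) y k)) =
    (if i = k then 2 * cinner3 y x else 0) - 2/3 * x i * cnj (y k)"
proof -
  have "(\<Sum>a<8. mvec (gm a) x i * cnj (mvec (gm a) y k)) =
      (\<Sum>a<8. (\<Sum>j<3. gm a i j * x j) * (\<Sum>l<3. gm a l k * cnj (y l)))"
    by (rule sum.cong) (simp_all add: mvec_def gm_hermitian)
  then show ?thesis
    unfolding sum_product_swap
    unfolding sum_lessThan_3 cinner3_def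
    using less_3_cases[OF assms(1)] less_3_cases[OF assms(2)]
    by (elim disjE) (simp_all add: gm_completeness field_simps)
qed

lemma sum_gm_square:
  assumes "k < 3" "l < 3"
  shows "(\<Sum>a<8. mmul (gm a) (gm a) k l) = (if k = l then 16/3 else 0)"
proof -
  have "(\<Sum>a<8. mmul (gm a) (gm a) k l) = (\<Sum>m<3. \<Sum>a<8. gm a k m * gm a m l)"
    unfolding mmul_def by (rule sum.swap)
  then show ?thesis
    unfolding sum_lessThan_3 using less_3_cases[OF assms(1)] less_3_cases[OF assms(2)]
    by (elim disjE) (simp_all add: gm_completeness)
qed

lemma sum_gm_casimir:
  assumes "k < 3"
  shows "(\<Sum>a<8. mvec (mmul (madj (gm a)) (gm a)) v k) = 16/3 * v k"
proof -
  have "madj (gm a) = gm a" if "a < 8" for a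
    using that by (simp add: madj_def gm_hermitian fun_eq_iff)
  then have "(\<Sum>a<8. mvec (mmul (madj (gm a)) (gm a)) v k) =
      (\<Sum>l<3. (\<Sum>a<8. mmul (gm a) (gm a) k l) * v l)"
    by (simp add: mvec_def sum_distrib_right sum.swap[of _ "{..<8}"])
  then show ?thesis
    unfolding sum_lessThan_3 using less_3_cases[OF assms]
    by (elim disjE) (simp_all add: sum_gm_square)
qed

section \<open>Coefficients of the filtering equation\<close>

(* The index 1 appears as Suc 0, its simp normal form. *)
lemma Wv_simps [simp]: "Wv w1 w2 0 = 1" "Wv w1 w2 (Suc 0) = w1" "Wv w1 w2 2 = w2"
  by (simp_all add: Wv_def)

lemma cinner3_Wv: "cinner3 (Wv w1 w2) (Wv w1 w2) = 1 + w1 * cnj w1 + w2 * cnj w2"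
  by (simp add: cinner3_def sum_lessThan_3 mult.commute)

lemma qf_diff_eq:
  "qf_diff w1 w2 k j = mvec (gm j) (Wv w1 w2) k - Wv w1 w2 k * mvec (gm j) (Wv w1 w2) 0"
  by (simp add: qf_diff_def Let_def)

lemma upt_0_8: "[0..<8] = [0, 1, 2, 3, 4, 5, 6, 7::nat]"
  by (simp add: eval_nat_numeral upt_rec)

lemma map_qf_diff_1:
  "map (qf_diff w1 w2 1) [0..<8] =
    [1 - w1^2, - w1 * w2, w2, \<i> * (1 + w1^2), \<i> * w1 * w2, - \<i> * w2, - 2 * w1, 0]"
  unfolding upt_0_8 list.map qf_diff_eq mvec_def sum_lessThan_3 gm_nth
  by (simp add: gm_s_def gm_a_def gm_d1_def gm_d2_def power2_eq_square algebra_simps)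

lemma map_qf_diff_2:
  "map (qf_diff w1 w2 2) [0..<8] =
    [- w1 * w2, 1 - w2^2, w1, \<i> * w1 * w2, \<i> * (1 + w2^2), \<i> * w1, - w2,
     - complex_of_real (sqrt 3) * w2]"
  unfolding upt_0_8 list.map qf_diff_eq mvec_def sum_lessThan_3 gm_nth
  by (simp add: gm_s_def gm_a_def gm_d1_def gm_d2_def power2_eq_square algebra_simps)
     (simp add: field_simps sqrt3_sq)

lemma sum_qf_diff_mult_mvec:
  assumes "k < 3" "i < 3"
  shows "(\<Sum>j<8. qf_diff w1 w2 k j * mvec (gm j) (Wv w1 w2) i) = 0"
proof -
  let ?W = "Wv w1 w2" and ?L = "\<lambda>j. mvec (gm j) (Wv w1 w2)"
  have "(\<Sum>j<8. qf_diff w1 w2 k j * ?L j i) =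
      (\<Sum>j<8. ?L j k * ?L j i) - ?W k * (\<Sum>j<8. ?L j 0 * ?L j i)"
    by (simp add: qf_diff_eq algebra_simps sum_subtractf sum_distrib_left)
  also have "\<dots> = (2 * ?W i * ?W k - 2/3 * ?W k * ?W i) - ?W k * (2 * ?W i * ?W 0 - 2/3 * ?W 0 * ?W i)"
    using assms by (simp only: sum_gm_mvec_mult zero_less_numeral)
  also have "\<dots> = 0"
    by (simp add: algebra_simps)
  finally show ?thesis .
qed

lemma qf_drift_eq_0:
  assumes "k < 3"
  shows "qf_drift w1 w2 k = 0"
proof -
  let ?W = "Wv w1 w2" and ?L = "\<lambda>j. mvec (gm j) (Wv w1 w2)"
  let ?C = "\<lambda>j. mvec (mmul (madj (gm j)) (gm j)) (Wv w1 w2)"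
  have "(\<Sum>j<8. ?W k * ?C j 0 - ?C j k) = 0"
    using assms by (simp add: sum_subtractf sum_distrib_left[symmetric] sum_gm_casimir)
  moreover have "(\<Sum>j<8. ?W k * (?L j 0)\<^sup>2 - ?L j 0 * ?L j k) =
      - (\<Sum>j<8. qf_diff w1 w2 k j * ?L j 0)"
    by (simp add: qf_diff_eq power2_eq_square algebra_simps flip: sum_negf)
  ultimately show ?thesis
    using assms by (simp add: qf_drift_def Let_def sum_qf_diff_mult_mvec)
qed

lemma qf_innov_drift_eq_0:
  assumes "k < 3"
  shows "qf_innov_drift w1 w2 k = 0"
proof -
  let ?W = "Wv w1 w2" and ?L = "\<lambda>j. mvec (gm j) (Wv w1 w2)"
  have "(\<Sum>j<8. qf_diff w1 w2 k j * (2 * expect (gm j) ?W)) =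
      (\<Sum>j<8. \<Sum>i<3. 2 / cinner3 ?W ?W * cnj (?W i) * (qf_diff w1 w2 k j * ?L j i))"
    by (simp add: expect_def cinner3_def sum_distrib_left sum_divide_distrib mult_ac)
  also have "\<dots> = (\<Sum>i<3. 2 / cinner3 ?W ?W * cnj (?W i) * (\<Sum>j<8. qf_diff w1 w2 k j * ?L j i))"
    by (subst sum.swap) (simp add: sum_distrib_left)
  also have "\<dots> = 0"
    using assms by (simp add: sum_qf_diff_mult_mvec)
  finally show ?thesis
    using assms by (simp add: qf_innov_drift_def qf_drift_eq_0)
qed

lemma sum_qf_diff_mult:
  assumes "a < 3" "b < 3"
  shows "(\<Sum>j<8. qf_diff w1 w2 a j * qf_diff w1 w2 b j) = 0"
proof -
  let ?L = "\<lambda>j. mvec (gm j) (Wv w1 w2)"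
  have "(\<Sum>j<8. qf_diff w1 w2 a j * qf_diff w1 w2 b j) =
      (\<Sum>j<8. qf_diff w1 w2 a j * ?L j b) - Wv w1 w2 b * (\<Sum>j<8. qf_diff w1 w2 a j * ?L j 0)"
    by (simp add: qf_diff_eq[of w1 w2 b] algebra_simps sum_subtractf sum_distrib_left)
  also have "\<dots> = 0"
    using assms by (simp add: sum_qf_diff_mult_mvec)
  finally show ?thesis .
qed

lemma sum_qf_diff_mult_cnj_mvec:
  assumes "a < 3" "c < 3"
  shows "(\<Sum>j<8. qf_diff w1 w2 a j * cnj (mvec (gm j) (Wv w1 w2) c)) =
    2 * cinner3 (Wv w1 w2) (Wv w1 w2) *
      ((if a = c then 1 else 0) - (if c = 0 then Wv w1 w2 a else 0))"
proof -
  let ?W = "Wv w1 w2" and ?L = "\<lambda>j. mvec (gm j) (Wv w1 w2)"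
  let ?N = "cinner3 ?W ?W"
  have "(\<Sum>j<8. qf_diff w1 w2 a j * cnj (?L j c)) =
      (\<Sum>j<8. ?L j a * cnj (?L j c)) - ?W a * (\<Sum>j<8. ?L j 0 * cnj (?L j c))"
    by (simp add: qf_diff_eq algebra_simps sum_subtractf sum_distrib_left)
  also have "\<dots> = ((if a = c then 2 * ?N else 0) - 2/3 * ?W a * cnj (?W c))
      - ?W a * ((if 0 = c then 2 * ?N else 0) - 2/3 * ?W 0 * cnj (?W c))"
    using assms by (simp only: sum_gm_mvec_mult_cnj zero_less_numeral)
  also have "\<dots> = 2 * ?N * ((if a = c then 1 else 0) - (if c = 0 then ?W a else 0))"
    by (simp add: algebra_simps)
  finally show ?thesis .
qed

lemma sum_qf_diff_mult_cnj:
  assumes "0 < a" "a < 3" "0 < b" "b < 3"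
  shows "(\<Sum>j<8. qf_diff w1 w2 a j * cnj (qf_diff w1 w2 b j)) =
    2 * cinner3 (Wv w1 w2) (Wv w1 w2) * ((if a = b then 1 else 0) + Wv w1 w2 a * cnj (Wv w1 w2 b))"
proof -
  let ?L = "\<lambda>j. mvec (gm j) (Wv w1 w2)"
  have "(\<Sum>j<8. qf_diff w1 w2 a j * cnj (qf_diff w1 w2 b j)) =
      (\<Sum>j<8. qf_diff w1 w2 a j * cnj (?L j b))
      - cnj (Wv w1 w2 b) * (\<Sum>j<8. qf_diff w1 w2 a j * cnj (?L j 0))"
    by (simp add: qf_diff_eq[of w1 w2 b] algebra_simps sum_subtractf sum_distrib_left)
  also have "\<dots> = 2 * cinner3 (Wv w1 w2) (Wv w1 w2) *
      ((if a = b then 1 else 0) + Wv w1 w2 a * cnj (Wv w1 w2 b))"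
    using assms by (simp add: sum_qf_diff_mult_cnj_mvec algebra_simps)
  finally show ?thesis .
qed

section \<open>Derivatives\<close>

lemma second_difference_approx:
  fixes S :: "'a::real_normed_vector \<Rightarrow> 'b::real_normed_vector"
  assumes S': "\<And>y. y \<in> ball x r \<Longrightarrow> (S has_derivative blinfun_apply (S' y)) (at y)"
    and S'': "\<And>y. y \<in> ball x r \<Longrightarrow> (S' has_derivative blinfun_apply (S'' y)) (at y)"
    and close: "\<And>y. y \<in> ball x r \<Longrightarrow> norm (S'' y - S'' x) \<le> \<epsilon>"
    and small: "norm u + norm v < r"
  shows "norm (S (x + u + v) - S (x + u) - S (x + v) + S x - S'' x v u) \<le> \<epsilon> * norm u * norm v"
proof -
  have "0 < r"
    using small norm_ge_zero[of u] norm_ge_zero[of v] by linarith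
  define C where "C = closed_segment x (x + u)"
  define \<phi> where "\<phi> y = S (y + v) - S y - S'' x v y" for y
  have near: "y + t *\<^sub>R v \<in> ball x r" if "y \<in> C" "0 \<le> t" "t \<le> 1" for y t
  proof -
    have "norm (x - (y + t *\<^sub>R v)) \<le> norm (x - y) + norm (t *\<^sub>R v)"
      using norm_triangle_ineq4[of "x - y" "t *\<^sub>R v"] by (simp add: algebra_simps)
    also have "norm (x - y) \<le> norm u"
      using segment_bound1[of y x "x + u"] that(1) by (simp add: C_def norm_minus_commute)
    also have "norm (t *\<^sub>R v) \<le> norm v"
      using that(2,3) by (simp add: mult_left_le_one_le)
    finally show ?thesis using small by (simp add: dist_norm)
  qed
  have S'_increment: "norm (S' (y + v) - S' y - S'' x v) \<le> \<epsilon> * norm v" if "y \<in> C" for y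
  proof -
    have "norm (S' (y + v) - S' y - S'' x ((y + v) - y)) \<le> norm ((y + v) - y) * \<epsilon>"
    proof (rule differentiable_bound_linearization[where S = "ball x r"])
      show "y + t *\<^sub>R (y + v - y) \<in> ball x r" if "t \<in> {0..1}" for t
        using near[OF \<open>y \<in> C\<close>] that by simp
      show "(S' has_derivative blinfun_apply (S'' z)) (at z within ball x r)"
        if "z \<in> ball x r" for z
        using S''[OF that] by (rule has_derivative_at_withinI)
      show "onorm (blinfun_apply (S'' z) - blinfun_apply (S'' x)) \<le> \<epsilon>" if "z \<in> ball x r" for z
        using close[OF that] by (simp add: norm_blinfun.rep_eq minus_blinfun.rep_eq fun_diff_def)
      show "x \<in> ball x r"
        using \<open>0 < r\<close> by simp
    qed
    then show ?thesis by (simp add: mult.commute)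
  qed
  have \<phi>': "(\<phi> has_derivative blinfun_apply (S' (y + v) - S' y - S'' x v)) (at y within C)"
    if "y \<in> C" for y
  proof -
    have "(\<phi> has_derivative (\<lambda>h. S' (y + v) h - S' y h - S'' x v h)) (at y)"
      unfolding \<phi>_def
      using near[OF that, of 0] near[OF that, of 1] S'
      by (auto intro!: derivative_eq_intros
          has_derivative_compose[of "\<lambda>y. y + v", unfolded o_def, OF _ S']
          bounded_linear_imp_has_derivative blinfun.bounded_linear_right)
    then show ?thesis
      by (simp add: has_derivative_at_withinI minus_blinfun.rep_eq fun_diff_def)
  qed
  have "norm (\<phi> (x + u) - \<phi> x) \<le> (\<epsilon> * norm v) * norm ((x + u) - x)"
    by (rule differentiable_bound[where S = C, OF _ \<phi>'])
       (auto simp: C_def S'_increment norm_blinfun.rep_eq[symmetric])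
  moreover have "\<phi> (x + u) - \<phi> x = S (x + u + v) - S (x + u) - S (x + v) + S x - S'' x v u"
    unfolding \<phi>_def by (simp add: blinfun.add_right algebra_simps)
  ultimately show ?thesis by (simp add: mult_ac)
qed

lemma second_derivative_symmetric:
  fixes S :: "'a::real_normed_vector \<Rightarrow> 'b::real_normed_vector"
  assumes "open U"
    and S': "\<forall>y\<in>U. (S has_derivative blinfun_apply (S' y)) (at y)"
    and S'': "\<forall>y\<in>U. (S' has_derivative blinfun_apply (S'' y)) (at y)"
    and "continuous_on U S''" and "x \<in> U"
  shows "S'' x u v = S'' x v u"
proof -
  have approx: "norm (S'' x u v - S'' x v u) \<le> 2 * \<epsilon> * norm u * norm v" if "\<epsilon> > 0" for \<epsilon>
  proof -
    obtain r1 where "r1 > 0" and r1: "\<forall>y\<in>U. dist y x < r1 \<longrightarrow> dist (S'' y) (S'' x) < \<epsilon>"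
      using \<open>continuous_on U S''\<close> \<open>x \<in> U\<close> \<open>\<epsilon> > 0\<close> unfolding continuous_on_iff by blast
    obtain r2 where "r2 > 0" and "ball x r2 \<subseteq> U"
      using \<open>open U\<close> \<open>x \<in> U\<close> open_contains_ball by blast
    define r where "r = min r1 r2"
    have ball_U: "y \<in> U" if "y \<in> ball x r" for y
      using that \<open>ball x r2 \<subseteq> U\<close> by (auto simp: r_def)
    have close: "norm (S'' y - S'' x) \<le> \<epsilon>" if "y \<in> ball x r" for y
      using r1 ball_U[OF that] that by (auto simp: r_def dist_norm norm_minus_commute)
    define s where "s = r / (2 * (norm u + norm v + 1))"
    have "s > 0"
      using \<open>r1 > 0\<close> \<open>r2 > 0\<close> by (simp add: s_def r_def add_nonneg_pos)
    have small: "norm (s *\<^sub>R u) + norm (s *\<^sub>R v) < r"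
    proof -
      have "norm (s *\<^sub>R u) + norm (s *\<^sub>R v) \<le> s * (norm u + norm v + 1)"
        using \<open>s > 0\<close> by (simp add: algebra_simps)
      also have "\<dots> = r / 2"
        using add_nonneg_pos[of "norm u + norm v" 1] by (simp add: s_def field_simps)
      finally show ?thesis
        using \<open>r1 > 0\<close> \<open>r2 > 0\<close> by (simp add: r_def)
    qed
    define A where "A = S (x + s *\<^sub>R u + s *\<^sub>R v) - S (x + s *\<^sub>R u) - S (x + s *\<^sub>R v) + S x"
    have "norm (A - S'' x (s *\<^sub>R v) (s *\<^sub>R u)) \<le> \<epsilon> * norm (s *\<^sub>R u) * norm (s *\<^sub>R v)"
      unfolding A_def using S' S'' close small ball_U
      by (intro second_difference_approx[where r = r]) auto
    moreover have "norm (A - S'' x (s *\<^sub>R u) (s *\<^sub>R v)) \<le> \<epsilon> * norm (s *\<^sub>R v) * norm (s *\<^sub>R u)"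
      using second_difference_approx[of x r S S' S'' \<epsilon> "s *\<^sub>R v" "s *\<^sub>R u"]
        S' S'' close small ball_U
      by (auto simp: A_def algebra_simps)
    ultimately have "norm (S'' x (s *\<^sub>R u) (s *\<^sub>R v) - S'' x (s *\<^sub>R v) (s *\<^sub>R u))
        \<le> 2 * \<epsilon> * norm (s *\<^sub>R u) * norm (s *\<^sub>R v)"
      using norm_triangle_ineq4[of "A - S'' x (s *\<^sub>R v) (s *\<^sub>R u)" "A - S'' x (s *\<^sub>R u) (s *\<^sub>R v)"]
      by (simp add: algebra_simps)
    then have "s * s * norm (S'' x u v - S'' x v u) \<le> s * s * (2 * \<epsilon> * norm u * norm v)"
      using \<open>s > 0\<close>
      by (simp add: blinfun.scaleR_left blinfun.scaleR_right flip: scaleR_diff_right)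
    then show ?thesis
      using \<open>s > 0\<close> by simp
  qed
  have "norm (S'' x u v - S'' x v u) \<le> 0 + e" if "e > 0" for e
  proof -
    define c where "c = 2 * norm u * norm v + 1"
    have "c > 0" by (simp add: c_def add_nonneg_pos)
    have "norm (S'' x u v - S'' x v u) \<le> 2 * (e / c) * norm u * norm v"
      using approx[of "e / c"] \<open>e > 0\<close> \<open>c > 0\<close> by simp
    also have "\<dots> \<le> e"
      using \<open>e > 0\<close> \<open>c > 0\<close> by (simp add: c_def field_simps)
    finally show ?thesis by simp
  qed
  then show ?thesis
    using field_le_epsilon[of "norm (S'' x u v - S'' x v u)" 0] by simp
qed

lemma line_has_derivative: "((\<lambda>t::real. x + t *\<^sub>R v) has_derivative (\<lambda>t. t *\<^sub>R v)) (at 0)"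
  by (auto intro!: derivative_eq_intros)

lemma pd_eq_derivative:
  assumes "(S has_derivative blinfun_apply (S' x)) (at x)"
  shows "pd S x v = S' x v"
proof -
  have "((S \<circ> (\<lambda>t::real. x + t *\<^sub>R v)) has_derivative (S' x \<circ> (\<lambda>t. t *\<^sub>R v))) (at 0)"
    using line_has_derivative by (rule diff_chain_at) (simp add: assms)
  then have "((\<lambda>t::real. S (x + t *\<^sub>R v)) has_vector_derivative S' x v) (at 0)"
    by (simp add: has_vector_derivative_def o_def blinfun.scaleR_right)
  then show ?thesis
    unfolding pd_def by (rule vector_derivative_at)
qed

lemma pd2_eq_second_derivative:
  assumes "open U"
    and S': "\<forall>y\<in>U. (S has_derivative blinfun_apply (S' y)) (at y)"
    and S'': "\<forall>y\<in>U. (S' has_derivative blinfun_apply (S'' y)) (at y)"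
    and "x \<in> U"
  shows "pd2 S x u v = S'' x u v"
proof -
  define T where "T = (\<lambda>t::real. x + t *\<^sub>R u) -` U"
  have "open T"
    unfolding T_def using \<open>open U\<close> by (auto intro!: continuous_open_vimage continuous_intros)
  have "0 \<in> T"
    unfolding T_def using \<open>x \<in> U\<close> by simp
  have "((S' \<circ> (\<lambda>t::real. x + t *\<^sub>R u)) has_derivative (S'' x \<circ> (\<lambda>t. t *\<^sub>R u))) (at 0)"
    using line_has_derivative by (rule diff_chain_at) (simp add: S'' \<open>x \<in> U\<close>)
  then have "((\<lambda>t::real. S' (x + t *\<^sub>R u) v) has_derivative (\<lambda>t. S'' x (t *\<^sub>R u) v)) (at 0)"
    by (auto simp: o_def intro: bounded_linear.has_derivative[OF blinfun.bounded_linear_left])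
  then have "((\<lambda>t::real. S' (x + t *\<^sub>R u) v) has_vector_derivative S'' x u v) (at 0)"
    by (simp add: has_vector_derivative_def blinfun.scaleR_left blinfun.scaleR_right)
  then have "((\<lambda>t::real. pd S (x + t *\<^sub>R u) v) has_vector_derivative S'' x u v) (at 0)"
  proof (rule has_vector_derivative_transform_within_open[OF _ \<open>open T\<close> \<open>0 \<in> T\<close>])
    show "S' (x + t *\<^sub>R u) v = pd S (x + t *\<^sub>R u) v" if "t \<in> T" for t
      using that S' by (simp add: T_def pd_eq_derivative[symmetric])
  qed
  then show ?thesis
    unfolding pd2_def by (rule vector_derivative_at)
qed

section \<open>Wirtinger calculus\<close>

(* Index (k, False) stands for the coordinate w_k, index (k, True) for its conjugate. *)
definition wirtinger_coord :: "complex \<times> complex \<Rightarrow> nat \<times> bool \<Rightarrow> complex" where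
  "wirtinger_coord z =
     (\<lambda>(k, conj). let zk = if k = 1 then fst z else snd z in if conj then cnj zk else zk)"

(* wirt2 with a bilinear form in place of the Hessian. *)
definition wirtinger_coeff ::
    "((complex \<times> complex) \<Rightarrow>\<^sub>L (complex \<times> complex) \<Rightarrow>\<^sub>L complex) \<Rightarrow> nat \<times> bool \<Rightarrow> nat \<times> bool \<Rightarrow> complex"
  where
  "wirtinger_coeff H =
     (\<lambda>(k, b) (l, c).
        let sb = (if b then 1 else -1) :: complex; sc = (if c then 1 else -1) :: complex in
        (1/4) * (H (ev k False) (ev l False) + sc * \<i> * H (ev k False) (ev l True)
                 + sb * \<i> * H (ev k True) (ev l False) + sb * sc * \<i> * \<i> * H (ev k True) (ev l True)))"

abbreviation wirtinger_index :: "(nat \<times> bool) set" where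
  "wirtinger_index \<equiv> {1, 2} \<times> UNIV"

lemma sum_wirtinger_index:
  "(\<Sum>p\<in>wirtinger_index. f p) = f (1, False) + f (1, True) + f (2, False) + f (2, True)"
  by (simp add: UNIV_bool sum.cartesian_product[symmetric] add.assoc)

lemma wirtinger_decomposition:
  "z = Re (fst z) *\<^sub>R ev 1 False + Im (fst z) *\<^sub>R ev 1 True
     + Re (snd z) *\<^sub>R ev 2 False + Im (snd z) *\<^sub>R ev 2 True"
  by (simp add: ev_def complex_eq_iff scaleR_conv_of_real prod_eq_iff)

lemma wirtinger_coeff_simps:
  "wirtinger_coeff H (k, False) (l, False) = (H (ev k False) (ev l False) - \<i> * H (ev k False) (ev l True)
      - \<i> * H (ev k True) (ev l False) - H (ev k True) (ev l True)) / 4"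
  "wirtinger_coeff H (k, False) (l, True) = (H (ev k False) (ev l False) + \<i> * H (ev k False) (ev l True)
      - \<i> * H (ev k True) (ev l False) + H (ev k True) (ev l True)) / 4"
  "wirtinger_coeff H (k, True) (l, False) = (H (ev k False) (ev l False) - \<i> * H (ev k False) (ev l True)
      + \<i> * H (ev k True) (ev l False) + H (ev k True) (ev l True)) / 4"
  "wirtinger_coeff H (k, True) (l, True) = (H (ev k False) (ev l False) + \<i> * H (ev k False) (ev l True)
      + \<i> * H (ev k True) (ev l False) - H (ev k True) (ev l True)) / 4"
  by (simp_all add: wirtinger_coeff_def)

lemma wirtinger_expansion_pair:
  fixes H :: "(complex \<times> complex) \<Rightarrow>\<^sub>L (complex \<times> complex) \<Rightarrow>\<^sub>L complex"
  shows "of_real (Re a) * of_real (Re b) * H (ev k False) (ev l False)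
      + of_real (Re a) * of_real (Im b) * H (ev k False) (ev l True)
      + of_real (Im a) * of_real (Re b) * H (ev k True) (ev l False)
      + of_real (Im a) * of_real (Im b) * H (ev k True) (ev l True)
    = a * b * wirtinger_coeff H (k, False) (l, False) + a * cnj b * wirtinger_coeff H (k, False) (l, True)
      + cnj a * b * wirtinger_coeff H (k, True) (l, False)
      + cnj a * cnj b * wirtinger_coeff H (k, True) (l, True)"
proof -
  obtain xa ya xb yb where a: "a = of_real xa + \<i> * of_real ya" and b: "b = of_real xb + \<i> * of_real yb"
    using complex_eq[of a] complex_eq[of b] by metis
  show ?thesis
    unfolding wirtinger_coeff_simps a b
    by (simp add: field_simps)
qed

lemma blinfun_bilinear_wirtinger:
  fixes H :: "(complex \<times> complex) \<Rightarrow>\<^sub>L (complex \<times> complex) \<Rightarrow>\<^sub>L complex"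
  shows "H u v = (\<Sum>p\<in>wirtinger_index. \<Sum>q\<in>wirtinger_index.
      wirtinger_coord u p * wirtinger_coord v q * wirtinger_coeff H p q)"
proof -
  let ?c = "\<lambda>z k. if k = (1::nat) then fst z else snd z"
  have "H u v = (\<Sum>k\<in>{1,2}. \<Sum>l\<in>{1,2}.
        of_real (Re (?c u k)) * of_real (Re (?c v l)) * H (ev k False) (ev l False)
      + of_real (Re (?c u k)) * of_real (Im (?c v l)) * H (ev k False) (ev l True)
      + of_real (Im (?c u k)) * of_real (Re (?c v l)) * H (ev k True) (ev l False)
      + of_real (Im (?c u k)) * of_real (Im (?c v l)) * H (ev k True) (ev l True))"
    by (subst wirtinger_decomposition[of u], subst wirtinger_decomposition[of v])
       (simp add: blinfun.add_left blinfun.add_right blinfun.scaleR_left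
         blinfun.scaleR_right scaleR_conv_of_real algebra_simps)
  also have "\<dots> = (\<Sum>k\<in>{1,2}. \<Sum>l\<in>{1,2}.
        ?c u k * ?c v l * wirtinger_coeff H (k, False) (l, False)
      + ?c u k * cnj (?c v l) * wirtinger_coeff H (k, False) (l, True)
      + cnj (?c u k) * ?c v l * wirtinger_coeff H (k, True) (l, False)
      + cnj (?c u k) * cnj (?c v l) * wirtinger_coeff H (k, True) (l, True))"
    by (simp only: wirtinger_expansion_pair)
  also have "\<dots> = (\<Sum>p\<in>wirtinger_index. \<Sum>q\<in>wirtinger_index.
      wirtinger_coord u p * wirtinger_coord v q * wirtinger_coeff H p q)"
    unfolding sum_wirtinger_index by (simp add: wirtinger_coord_def add_ac)
  finally show ?thesis .
qed

lemma sum_blinfun_quadratic_wirtinger: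
  fixes H :: "(complex \<times> complex) \<Rightarrow>\<^sub>L (complex \<times> complex) \<Rightarrow>\<^sub>L complex"
  shows "(\<Sum>j\<in>J. H (g j) (g j)) = (\<Sum>p\<in>wirtinger_index. \<Sum>q\<in>wirtinger_index.
      (\<Sum>j\<in>J. wirtinger_coord (g j) p * wirtinger_coord (g j) q) * wirtinger_coeff H p q)"
  by (simp add: blinfun_bilinear_wirtinger[of H] sum_swap_nested[where A = J] sum_distrib_right)

lemma wirtinger_coeff_commute:
  fixes H :: "(complex \<times> complex) \<Rightarrow>\<^sub>L (complex \<times> complex) \<Rightarrow>\<^sub>L complex"
  assumes "\<And>u v. H u v = H v u"
  shows "wirtinger_coeff H p q = wirtinger_coeff H q p"
proof -
  obtain k b l c where "p = (k, b)" "q = (l, c)"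
    by fastforce
  moreover have "H (ev l d) (ev k e) = H (ev k e) (ev l d)" for d e
    by (rule assms)
  ultimately show ?thesis
    by (cases b; cases c) (simp_all add: wirtinger_coeff_def)
qed

lemma wirt2_eq_wirtinger_coeff:
  fixes H :: "(complex \<times> complex) \<Rightarrow>\<^sub>L (complex \<times> complex) \<Rightarrow>\<^sub>L complex"
  assumes "\<And>u v. pd2 S x u v = H u v"
  shows "wirt2 S x k b l c = wirtinger_coeff H (k, b) (l, c)"
  using assms by (simp add: wirt2_def wirtinger_coeff_def)

section \<open>The diffusion operator\<close>

lemma sum_wirtinger_coord_qf_diff:
  fixes w1 w2 :: complex
  assumes "k \<in> {1, 2}" "l \<in> {1, 2}"
  defines "g \<equiv> \<lambda>j. (qf_diff w1 w2 1 j, qf_diff w1 w2 2 j)"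
  shows "(\<Sum>j<8. wirtinger_coord (g j) (k, b) * wirtinger_coord (g j) (l, c)) =
    (if b = c then 0
     else 2 * cinner3 (Wv w1 w2) (Wv w1 w2) * ((if k = l then 1 else 0)
       + (if b then cnj (Wv w1 w2 k) * Wv w1 w2 l else Wv w1 w2 k * cnj (Wv w1 w2 l))))"
proof -
  have coord: "wirtinger_coord (g j) (m, d) = (if d then cnj (qf_diff w1 w2 m j) else qf_diff w1 w2 m j)"
    if "m \<in> {1, 2}" for m d j
    using that by (auto simp: g_def wirtinger_coord_def)
  have "0 < k" "k < 3" "0 < l" "l < 3"
    using assms(1,2) by auto
  note sums = sum_qf_diff_mult[OF \<open>k < 3\<close> \<open>l < 3\<close>]
    sum_qf_diff_mult_cnj[OF \<open>0 < k\<close> \<open>k < 3\<close> \<open>0 < l\<close> \<open>l < 3\<close>]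
    sum_qf_diff_mult_cnj[OF \<open>0 < l\<close> \<open>l < 3\<close> \<open>0 < k\<close> \<open>k < 3\<close>]
  have "(\<Sum>j<8. cnj (qf_diff w1 w2 k j) * cnj (qf_diff w1 w2 l j)) =
      cnj (\<Sum>j<8. qf_diff w1 w2 k j * qf_diff w1 w2 l j)"
    by simp
  moreover have "(\<Sum>j<8. cnj (qf_diff w1 w2 k j) * qf_diff w1 w2 l j) =
      (\<Sum>j<8. qf_diff w1 w2 l j * cnj (qf_diff w1 w2 k j))"
    by (simp add: mult.commute)
  ultimately show ?thesis
    using sums by (simp add: coord[OF assms(1)] coord[OF assms(2)] mult.commute eq_commute[of l])
qed

lemma sum_quadratic_qf_diff:
  fixes H :: "(complex \<times> complex) \<Rightarrow>\<^sub>L (complex \<times> complex) \<Rightarrow>\<^sub>L complex"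
  assumes "\<And>u v. H u v = H v u"
  shows "(\<Sum>j<8. H (qf_diff w1 w2 1 j, qf_diff w1 w2 2 j) (qf_diff w1 w2 1 j, qf_diff w1 w2 2 j)) =
    4 * cinner3 (Wv w1 w2) (Wv w1 w2) *
      ((1 + w1 * cnj w1) * wirtinger_coeff H (1, False) (1, True)
       + (1 + w2 * cnj w2) * wirtinger_coeff H (2, False) (2, True)
       + w1 * cnj w2 * wirtinger_coeff H (1, False) (2, True)
       + cnj w1 * w2 * wirtinger_coeff H (1, True) (2, False))"
  unfolding sum_blinfun_quadratic_wirtinger sum_wirtinger_index
  \<comment> \<open>the moments must be rewritten before simp turns the index 1 into Suc 0\<close>
  by (simp only: sum_wirtinger_coord_qf_diff insert_iff singleton_iff simp_thms)
     (simp add: wirtinger_coeff_commute[OF assms, of "(_, True)" "(_, False)"] algebra_simps)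

lemma of_real_cmod_power2: "(complex_of_real (cmod z))\<^sup>2 = z * cnj z"
  using complex_norm_square[of z] by (simp only: of_real_power)

lemma diffusion_op_eq_laplace_pro:
  assumes "open U"
    and S': "\<forall>x\<in>U. (S has_derivative blinfun_apply (S' x)) (at x)"
    and S'': "\<forall>x\<in>U. (S' has_derivative blinfun_apply (S'' x)) (at x)"
    and "continuous_on U S''" and "w \<in> U"
  shows "diffusion_op S w = 2 * laplace_pro S w"
proof -
  obtain w1 w2 where w: "fst w = w1" "snd w = w2"
    by blast
  have pd2: "pd2 S w u v = S'' w u v" for u v
    using pd2_eq_second_derivative[OF \<open>open U\<close> S' S'' \<open>w \<in> U\<close>] .
  have sym: "S'' w u v = S'' w v u" for u v
    using second_derivative_symmetric[OF \<open>open U\<close> S' S'' \<open>continuous_on U S''\<close> \<open>w \<in> U\<close>] .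
  have "pd S w (qf_drift w1 w2 1, qf_drift w1 w2 2) = 0"
    using pd_eq_derivative[of S S' w] S' \<open>w \<in> U\<close>
    by (simp add: qf_drift_eq_0 blinfun.zero_right flip: zero_prod_def)
  then have "diffusion_op S w =
      1/2 * (\<Sum>j<8. S'' w (qf_diff w1 w2 1 j, qf_diff w1 w2 2 j) (qf_diff w1 w2 1 j, qf_diff w1 w2 2 j))"
    by (simp add: diffusion_op_def pd2 w)
  also have "\<dots> = 2 * laplace_pro S w"
    unfolding sum_quadratic_qf_diff[OF sym]
    by (simp add: laplace_pro_def w wirt2_eq_wirtinger_coeff[OF pd2] cinner3_Wv of_real_cmod_power2 algebra_simps)
  finally show ?thesis .
qed

theorem proposition4p1:
  shows
   "(\<forall>w1 w2. qf_drift w1 w2 1 = 0 \<and> qf_drift w1 w2 2 = 0)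
    \<and> (\<forall>w1 w2. map (qf_diff w1 w2 1) [0..<8] =
          [1 - w1^2, - w1 * w2, w2, \<i> * (1 + w1^2), \<i> * w1 * w2, - \<i> * w2, - 2 * w1, 0])
    \<and> (\<forall>w1 w2. map (qf_diff w1 w2 2) [0..<8] =
          [- w1 * w2, 1 - w2^2, w1, \<i> * w1 * w2, \<i> * (1 + w2^2), \<i> * w1, - w2,
           - complex_of_real (sqrt 3) * w2])
    \<and> (\<forall>w1 w2. qf_innov_drift w1 w2 1 = 0 \<and> qf_innov_drift w1 w2 2 = 0)
    \<and> (\<forall>(S :: complex \<times> complex \<Rightarrow> complex)
         (S' :: complex \<times> complex \<Rightarrow> ((complex \<times> complex) \<Rightarrow>\<^sub>L complex))
         (S'' :: complex \<times> complex \<Rightarrow> ((complex \<times> complex) \<Rightarrow>\<^sub>L ((complex \<times> complex) \<Rightarrow>\<^sub>L complex)))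
         U w.
         open U \<longrightarrow>
         (\<forall>x\<in>U. (S has_derivative blinfun_apply (S' x)) (at x)) \<longrightarrow>
         (\<forall>x\<in>U. (S' has_derivative blinfun_apply (S'' x)) (at x)) \<longrightarrow>
         continuous_on U S'' \<longrightarrow>
         w \<in> U \<longrightarrow>
         diffusion_op S w = 2 * laplace_pro S w)"
  by (intro conjI allI impI map_qf_diff_1 map_qf_diff_2 diffusion_op_eq_laplace_pro)
     (simp_all add: qf_drift_eq_0 qf_innov_drift_eq_0)

end
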